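(* There is an absolute constant $C>0$ such that the following holds. Let $\ell,w\in\mathbb{N}$, $\Delta=2^\ell$, $\mathbf{s}\in\mathbb{R}_{\ge0}^{G_\Delta}$, and let $\boldsymbol{\nu}_i\in\mathbb{R}^{C_{2^i}}$ ($i=0,\dots,\ell$) be arbitrary vectors. Set $\mathbf{y}'_i=2^{-i}(\mathbf{P}_i\mathbf{s}+\boldsymbol{\nu}_i)$ and $\mathbf{y}'=[\mathbf{y}'_0\cdots\mathbf{y}'_\ell]$. Run the following procedure: $S_0=C_1$; for $i=1,\dots,\ell$, let $T_i$ be the set of children of cells in $S_{i-1}$ and let $S_i$ be a set of $\min\{w,|T_i|\}$ cells of $T_i$ with the largest values of $\mathbf{y}'$ (ties broken arbitrarily); let $S=\bigcup_{i=0}^\ell S_i$ and $\hat{\mathbf{y}}=\mathbf{y}'|_S$. Let $\mathbf{y}^*\in\arg\min_{\mathbf{y}\in\mathcal{M}_w}\|\mathbf{P}\mathbf{s}-\mathbf{y}\|_1$, let $T^*\in\mathcal{T}_w$ be such that $\mathrm{supp}(\mathbf{y}^* )\subseteq T^*$, and for $i=0,\dots,\ell$ let $T^*_i=T^*\cap C_{2^i}$ and $V_i=T^*_i\setminus S_i$. Then $$\|\hat{\mathbf{y}}-\mathbf{P}\mathbf{s}\|_1\le 3\|\mathbf{y}^*-\mathbf{P}\mathbf{s}\|_1+C\sum_{i=0}^{\ell}2^{-i}\big\|\boldsymbol{\nu}_i|_{V_i\cup S_i}\big\|_1.$$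
   Context: $G_\Delta=\{(a/\Delta,b/\Delta): a,b\in\{0,\dots,\Delta-1\}\}$. For $i\ge0$, the level-$i$ cells are $C_{2^i}=\{[a,a+2^{-i})\times[b,b+2^{-i}) : (a,b)\in G_{2^i}\}$ (so $C_1=C_{2^0}$ consists of the single root cell $[0,1)^2$). $\mathbf{P}_i\in\{0,1\}^{C_{2^i}\times G_\Delta}$ has $\mathbf{P}_i(c,p)=1$ iff $p\in c$. The scaled pyramidal transform $\mathbf{P}$ is the matrix with rows indexed by $\bigcup_{i=0}^\ell C_{2^i}$ obtained by stacking $\mathbf{P}_0,2^{-1}\mathbf{P}_1,\dots,2^{-\ell}\mathbf{P}_\ell$. Vectors indexed by $\bigcup_i C_{2^i}$ are written $\mathbf{y}=[\mathbf{y}_0\cdots\mathbf{y}_\ell]$ with $\mathbf{y}_i\in\mathbb{R}^{C_{2^i}}$. A cell $c'\in C_{2^i}$ ($i\ge1$) is a child of $c\in C_{2^{i-1}}$ if $c'\subseteq c$; this makes the cells a tree rooted at $[0,1)^2$ with every internal node having four children. $\mathcal{T}_w$ is the set of subtrees (sets of cells containing the root and closed under taking parents) with at most $w$ cells at each level. $\mathcal{M}_w$ is the set of $\mathbf{y}=[\mathbf{y}_0\cdots\mathbf{y}_\ell]$ with $\mathbf{y}_i\in\mathbb{R}_{\ge0}^{C_{2^i}}$ such that (1) $\mathrm{supp}(\mathbf{y})\subseteq T$ for some $T\in\mathcal{T}_w$, and (2) for all $i\in\{0,\dots,\ell-1\}$ and $p\in C_{2^i}$, $\mathbf{y}(p)\ge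 2\sum_{c\text{ child of }p}\mathbf{y}(c)$. For a vector $\mathbf{v}$ and index set $S$, $\mathbf{v}|_S$ agrees with $\mathbf{v}$ on $S$ and is $0$ elsewhere; $\mathrm{supp}$ denotes the set of nonzero coordinates. *)

theory Defs
  imports Complex_Main
begin

text \<open>A cell of level i is encoded by (i, a, b) with a, b < 2^i; it denotes the
  half-open square [a/2^i, (a+1)/2^i) x [b/2^i, (b+1)/2^i).
  A grid point of G_Delta (Delta = 2^l) is encoded by (a, b) with a, b < 2^l;
  it denotes (a/2^l, b/2^l).\<close>

type_synonym cell = "nat \<times> nat \<times> nat"
type_synonym gpoint = "nat \<times> nat"

definition level :: "cell \<Rightarrow> nat" where
  "level c = fst c"

definition cells_at :: "nat \<Rightarrow> cell set" where
  "cells_at i = {(i, a, b) | a b. a < 2 ^ i \<and> b < 2 ^ i}"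

definition all_cells :: "nat \<Rightarrow> cell set" where
  "all_cells l = (\<Union>i\<le>l. cells_at i)"

definition root :: cell where
  "root = (0, 0, 0)"

definition cell_set :: "cell \<Rightarrow> (real \<times> real) set" where
  "cell_set c = (case c of (i, a, b) \<Rightarrow>
     {real a / 2 ^ i ..< (real a + 1) / 2 ^ i} \<times> {real b / 2 ^ i ..< (real b + 1) / 2 ^ i})"

definition grid :: "nat \<Rightarrow> gpoint set" where
  "grid l = {(a, b). a < 2 ^ l \<and> b < 2 ^ l}"

definition gpt :: "nat \<Rightarrow> gpoint \<Rightarrow> real \<times> real" where
  "gpt l p = (real (fst p) / 2 ^ l, real (snd p) / 2 ^ l)"

definition Pent :: "nat \<Rightarrow> cell \<Rightarrow> gpoint \<Rightarrow> real" where
  "Pent l c p = (if gpt l p \<in> cell_set c then 1 else 0)"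

definition Pi_s :: "nat \<Rightarrow> (gpoint \<Rightarrow> real) \<Rightarrow> cell \<Rightarrow> real" where
  "Pi_s l s c = (\<Sum>p\<in>grid l. Pent l c p * s p)"

definition Ps :: "nat \<Rightarrow> (gpoint \<Rightarrow> real) \<Rightarrow> cell \<Rightarrow> real" where
  "Ps l s c = (if c \<in> all_cells l then (1/2) ^ level c * Pi_s l s c else 0)"

definition l1 :: "nat \<Rightarrow> (cell \<Rightarrow> real) \<Rightarrow> real" where
  "l1 l v = (\<Sum>c\<in>all_cells l. \<bar>v c\<bar>)"

definition is_child :: "nat \<Rightarrow> cell \<Rightarrow> cell \<Rightarrow> bool" where
  "is_child l c' c \<longleftrightarrow> c \<in> all_cells l \<and> c' \<in> all_cells l \<and>
     level c' = Suc (level c) \<and> cell_set c' \<subseteq> cell_set c"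

definition children :: "nat \<Rightarrow> cell set \<Rightarrow> cell set" where
  "children l A = {c'. \<exists>c\<in>A. is_child l c' c}"

definition subtrees :: "nat \<Rightarrow> nat \<Rightarrow> cell set set" where
  "subtrees l w = {T. T \<subseteq> all_cells l \<and> root \<in> T \<and>
     (\<forall>c'\<in>T. \<forall>c. is_child l c' c \<longrightarrow> c \<in> T) \<and>
     (\<forall>i\<le>l. card (T \<inter> cells_at i) \<le> w)}"

definition supp :: "(cell \<Rightarrow> real) \<Rightarrow> cell set" where
  "supp y = {c. y c \<noteq> 0}"

definition Mw :: "nat \<Rightarrow> nat \<Rightarrow> (cell \<Rightarrow> real) set" where
  "Mw l w = {y. (\<forall>c. c \<notin> all_cells l \<longrightarrow> y c = 0) \<and>
     (\<forall>c\<in>all_cells l. y c \<ge> 0) \<and>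
     (\<exists>T\<in>subtrees l w. supp y \<subseteq> T) \<and>
     (\<forall>p\<in>all_cells l. level p < l \<longrightarrow>
        y p \<ge> 2 * (\<Sum>c\<in>{c. is_child l c p}. y c))}"

definition restrict_to :: "(cell \<Rightarrow> real) \<Rightarrow> cell set \<Rightarrow> cell \<Rightarrow> real" where
  "restrict_to v S c = (if c \<in> S then v c else 0)"

end

theory Submission
  imports Defs
begin

(* Write x = P s. Off the selection S, the error of the estimate at a cell is x itself; on S it
  is the noise. An optimal y vanishes outside its tree T, so there it also pays x, and the only
  cells left to account for are the missed tree cells V_i. A missed cell of level i+1 either is
  a child of a selected cell, and then lost the selection to cells of S_(i+1) outside T (as
  |T_(i+1)| <= w = |S_(i+1)|, there are at least as many of those), or its parent is itself
  missed, and the children of a cell carry at most half of its mass. Hence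
  x(V_(i+1)) <= x(S_(i+1) - T) + x(V_i)/2 + noise, and summing this halving recursion costs a
  factor 2, which gives the constants 3 and 5. *)

lemma card_Diff_le_card_Diff:
  assumes "finite A" "finite B" "card A \<le> card B"
  shows "card (A - B) \<le> card (B - A)"
  using assms by (simp add: card_Diff_subset_Int Int_commute)

lemma sum_le_sum_if_dominated:
  fixes g u :: "'a \<Rightarrow> real"
  assumes "finite E" "card F \<le> card E"
    and "\<And>c. c \<in> E \<Longrightarrow> 0 \<le> u c"
    and "\<And>c' c. c' \<in> F \<Longrightarrow> c \<in> E \<Longrightarrow> g c' \<le> u c"
  shows "sum g F \<le> sum u E"
proof (cases "card F = 0")
  case True
  then have "sum g F = 0"
    by (metis card_0_eq sum.empty sum.infinite)
  then show ?thesis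
    using assms(3) by (simp add: sum_nonneg)
next
  case False
  then have "E \<noteq> {}"
    using assms(2) by auto
  define t where "t = Min (u ` E)"
  have "t \<ge> 0" and "\<And>c. c \<in> E \<Longrightarrow> t \<le> u c"
    using assms(1,3) \<open>E \<noteq> {}\<close> by (auto simp: t_def)
  have "sum g F \<le> of_nat (card F) * t"
    using assms(1,4) \<open>E \<noteq> {}\<close> by (intro sum_bounded_above) (auto simp: t_def)
  also have "\<dots> \<le> of_nat (card E) * t"
    using assms(2) \<open>t \<ge> 0\<close> by (intro mult_right_mono) auto
  also have "\<dots> \<le> sum u E"
    using sum_bounded_below[of E t u] \<open>\<And>c. c \<in> E \<Longrightarrow> t \<le> u c\<close> by simp
  finally show ?thesis .
qed

lemma sum_le_twice_if_halving:
  fixes v c :: "nat \<Rightarrow> real"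
  assumes "v 0 \<le> c 0" "\<And>j. Suc j \<le> l \<Longrightarrow> v (Suc j) \<le> c (Suc j) + v j / 2" "0 \<le> v l"
  shows "(\<Sum>i\<le>l. v i) \<le> 2 * (\<Sum>i\<le>l. c i)"
proof -
  have "(\<Sum>i\<le>k. v i) + v k \<le> 2 * (\<Sum>i\<le>k. c i)" if "k \<le> l" for k
    using that
  proof (induction k)
    case (Suc k)
    then show ?case using assms(2)[of k] by simp
  qed (use assms(1) in simp)
  then show ?thesis using assms(3) by fastforce
qed

lemma finite_cells_at [simp]: "finite (cells_at i)"
proof -
  have "cells_at i = (\<lambda>(a, b). (i, a, b)) ` ({..<2 ^ i} \<times> {..<2 ^ i})"
    unfolding cells_at_def by auto
  then show ?thesis by simp
qed

lemma finite_all_cells [simp]: "finite (all_cells l)"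
  unfolding all_cells_def by simp

lemma level_cells_at: "c \<in> cells_at i \<Longrightarrow> level c = i"
  unfolding cells_at_def level_def by auto

lemma cells_at_0: "cells_at 0 = {root}"
  unfolding cells_at_def root_def by auto

lemma cells_at_subset_all_cells: "i \<le> l \<Longrightarrow> cells_at i \<subseteq> all_cells l"
  unfolding all_cells_def by auto

lemma all_cells_iff: "c \<in> all_cells l \<longleftrightarrow> level c \<le> l \<and> c \<in> cells_at (level c)"
  unfolding all_cells_def by (auto dest: level_cells_at)

lemma sum_all_cells: "sum f (all_cells l) = (\<Sum>i\<le>l. sum f (cells_at i))"
  unfolding all_cells_def by (rule sum.UNION_disjoint) (auto dest: level_cells_at)

lemma finite_children [simp]: "finite (children l A)"
  by (rule finite_subset[of _ "all_cells l"]) (auto simp: children_def is_child_def)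

lemma children_subset_cells_at:
  assumes "A \<subseteq> cells_at i"
  shows "children l A \<subseteq> cells_at (Suc i)"
proof
  fix c
  assume "c \<in> children l A"
  then obtain p where "p \<in> A" "is_child l c p"
    unfolding children_def by auto
  then have "level c = Suc i" "c \<in> all_cells l"
    using assms level_cells_at[of p i] unfolding is_child_def by auto
  then show "c \<in> cells_at (Suc i)"
    using all_cells_iff by metis
qed

lemma interval_index_unique:
  fixes t :: real
  assumes "real a / 2 ^ k \<le> t" "t < (real a + 1) / 2 ^ k"
    and "real a' / 2 ^ k \<le> t" "t < (real a' + 1) / 2 ^ k"
  shows "a = a'"
proof -
  have "real a \<le> t * 2 ^ k" "t * 2 ^ k < real a + 1" "real a' \<le> t * 2 ^ k" "t * 2 ^ k < real a' + 1"
    using assms by (auto simp: field_simps)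
  then show ?thesis by linarith
qed

lemma cell_set_disjoint:
  assumes "level c = level c'" "c \<noteq> c'"
  shows "cell_set c \<inter> cell_set c' = {}"
  using assms unfolding cell_set_def level_def
  by (auto split: prod.splits dest: interval_index_unique)

lemma dyadic_interval_subset:
  "{real a / 2 ^ Suc i ..< (real a + 1) / 2 ^ Suc i}
     \<subseteq> {real (a div 2) / 2 ^ i ..< (real (a div 2) + 1) / 2 ^ i}"
proof -
  have "2 * real (a div 2) \<le> real a" "real a + 1 \<le> 2 * real (a div 2) + 2"
    by linarith+
  then have "2 * real (a div 2) * 2 ^ i \<le> real a * 2 ^ i"
    "(real a + 1) * 2 ^ i \<le> (2 * real (a div 2) + 2) * 2 ^ i"
    by (simp_all add: mult_right_mono)
  then show ?thesis by (auto simp: field_simps)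
qed

lemma ex_parent:
  assumes "c \<in> cells_at (Suc i)" "Suc i \<le> l"
  shows "\<exists>p\<in>cells_at i. is_child l c p"
proof -
  obtain a b where c: "c = (Suc i, a, b)" "a < 2 ^ Suc i" "b < 2 ^ Suc i"
    using assms(1) unfolding cells_at_def by auto
  define p where "p = (i, a div 2, b div 2)"
  have "p \<in> cells_at i"
    using c by (auto simp: p_def cells_at_def less_mult_imp_div_less)
  moreover have "cell_set c \<subseteq> cell_set p"
    using dyadic_interval_subset[of a i] dyadic_interval_subset[of b i]
    by (auto simp: c p_def cell_set_def)
  ultimately have "is_child l c p"
    using assms c unfolding is_child_def
    by (auto simp: level_def cells_at_def all_cells_def)
  with \<open>p \<in> cells_at i\<close> show ?thesis by blast
qed

lemma sum_Pent_children_le: "(\<Sum>c\<in>children l {p}. Pent l c q) \<le> Pent l p q"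
proof (cases "\<exists>c0\<in>children l {p}. gpt l q \<in> cell_set c0")
  case True
  then obtain c0 where c0: "c0 \<in> children l {p}" "gpt l q \<in> cell_set c0" by blast
  have "Pent l c q = 0" if "c \<in> children l {p} - {c0}" for c
  proof -
    have "level c = level c0"
      using that c0(1) by (auto simp: children_def is_child_def)
    then show ?thesis
      using that c0(2) cell_set_disjoint[of c c0] by (auto simp: Pent_def)
  qed
  then have "(\<Sum>c\<in>children l {p}. Pent l c q) = Pent l c0 q"
    using c0(1) by (simp add: sum.remove)
  also have "\<dots> = Pent l p q"
    using c0 by (auto simp: Pent_def children_def is_child_def)
  finally show ?thesis by simp
next
  case False
  then show ?thesis by (simp add: Pent_def)
qed

lemma Pi_s_nonneg: "\<forall>q\<in>grid l. 0 \<le> s q \<Longrightarrow> 0 \<le> Pi_s l s c"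
  unfolding Pi_s_def Pent_def by (intro sum_nonneg) auto

lemma Ps_nonneg: "\<forall>q\<in>grid l. 0 \<le> s q \<Longrightarrow> 0 \<le> Ps l s c"
  unfolding Ps_def by (simp add: Pi_s_nonneg)

lemma sum_Pi_s_children_le:
  assumes "\<forall>q\<in>grid l. 0 \<le> s q"
  shows "(\<Sum>c\<in>children l {p}. Pi_s l s c) \<le> Pi_s l s p"
proof -
  have "(\<Sum>c\<in>children l {p}. Pi_s l s c)
      = (\<Sum>q\<in>grid l. (\<Sum>c\<in>children l {p}. Pent l c q) * s q)"
    unfolding Pi_s_def by (simp add: sum.swap[of _ "children l {p}"] sum_distrib_right)
  also have "\<dots> \<le> (\<Sum>q\<in>grid l. Pent l p q * s q)"
    using assms sum_Pent_children_le by (intro sum_mono mult_right_mono) auto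
  finally show ?thesis unfolding Pi_s_def .
qed

lemma sum_Ps_children_le:
  assumes "\<forall>q\<in>grid l. 0 \<le> s q"
  shows "(\<Sum>c\<in>children l {p}. Ps l s c) \<le> Ps l s p / 2"
proof (cases "p \<in> all_cells l")
  case True
  have "(\<Sum>c\<in>children l {p}. Ps l s c) = (1/2) ^ Suc (level p) * (\<Sum>c\<in>children l {p}. Pi_s l s c)"
    by (auto simp: sum_distrib_left Ps_def children_def is_child_def intro: sum.cong)
  also have "\<dots> \<le> (1/2) ^ Suc (level p) * Pi_s l s p"
    using sum_Pi_s_children_le[OF assms] by (intro mult_left_mono) auto
  also have "\<dots> = Ps l s p / 2"
    using True by (simp add: Ps_def)
  finally show ?thesis .
next
  case False
  then have "children l {p} = {}"
    by (auto simp: children_def is_child_def)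
  then show ?thesis by (simp add: Ps_def False)
qed

lemma sum_Ps_children_set_le:
  assumes "\<forall>q\<in>grid l. 0 \<le> s q" "finite A"
  shows "sum (Ps l s) (children l A) \<le> sum (Ps l s) A / 2"
proof -
  have "sum (Ps l s) (children l A) \<le> (\<Sum>(p, c)\<in>(SIGMA p:A. children l {p}). Ps l s c)"
  proof (rule sum_le_included[where i = snd])
    show "\<forall>c\<in>children l A. \<exists>pc\<in>(SIGMA p:A. children l {p}). snd pc = c \<and> Ps l s c \<le> (case pc of (p, c') \<Rightarrow> Ps l s c')"
      by (fastforce simp: children_def)
  qed (use assms in \<open>auto simp: Ps_nonneg\<close>)
  also have "\<dots> = (\<Sum>p\<in>A. \<Sum>c\<in>children l {p}. Ps l s c)"
    using assms(2) by (simp add: sum.Sigma)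
  also have "\<dots> \<le> (\<Sum>p\<in>A. Ps l s p / 2)"
    using sum_Ps_children_le[OF assms(1)] by (intro sum_mono)
  finally show ?thesis by (simp add: sum_divide_distrib)
qed

definition noisy_Ps :: "nat \<Rightarrow> (gpoint \<Rightarrow> real) \<Rightarrow> (cell \<Rightarrow> real) \<Rightarrow> cell \<Rightarrow> real" where
  "noisy_Ps l s \<nu> c = (if c \<in> all_cells l then (1/2) ^ level c * (Pi_s l s c + \<nu> c) else 0)"

locale greedy_tree_selection =
  fixes l w :: nat and s :: "gpoint \<Rightarrow> real" and \<nu> :: "cell \<Rightarrow> real"
    and S :: "nat \<Rightarrow> cell set" and T :: "cell set"
  assumes s_nonneg: "\<forall>q\<in>grid l. 0 \<le> s q"
    and S_0: "S 0 = {root}"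
    and S_Suc_subset: "Suc j \<le> l \<Longrightarrow> S (Suc j) \<subseteq> children l (S j)"
    and card_S_Suc: "Suc j \<le> l \<Longrightarrow> card (S (Suc j)) = min w (card (children l (S j)))"
    and S_Suc_greedy: "Suc j \<le> l \<Longrightarrow> c \<in> S (Suc j) \<Longrightarrow> c' \<in> children l (S j) - S (Suc j) \<Longrightarrow>
      noisy_Ps l s \<nu> c' \<le> noisy_Ps l s \<nu> c"
    and T_subtree: "T \<in> subtrees l w"
begin

abbreviation mass :: "cell set \<Rightarrow> real" where
  "mass \<equiv> sum (Ps l s)"

abbreviation missed :: "nat \<Rightarrow> cell set" where
  "missed i \<equiv> T \<inter> cells_at i - S i"

abbreviation noise :: "nat \<Rightarrow> real" where
  "noise i \<equiv> (1/2) ^ i * (\<Sum>c\<in>missed i \<union> S i. \<bar>\<nu> c\<bar>)"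

lemma S_subset_cells_at: "i \<le> l \<Longrightarrow> S i \<subseteq> cells_at i"
proof (induction i)
  case 0
  then show ?case by (simp add: S_0 cells_at_0)
next
  case (Suc j)
  then have "S j \<subseteq> cells_at j" by simp
  then have "children l (S j) \<subseteq> cells_at (Suc j)"
    by (rule children_subset_cells_at)
  then show ?case
    using S_Suc_subset[OF Suc.prems] by blast
qed

lemma finite_S: "i \<le> l \<Longrightarrow> finite (S i)"
  using S_subset_cells_at finite_cells_at by (rule finite_subset)

lemma noisy_Ps_eq: "c \<in> cells_at i \<Longrightarrow> i \<le> l \<Longrightarrow> noisy_Ps l s \<nu> c = Ps l s c + (1/2) ^ i * \<nu> c"
  using cells_at_subset_all_cells[of i l] level_cells_at[of c i]
  by (auto simp: noisy_Ps_def Ps_def algebra_simps)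

lemma error_at_level:
  assumes "i \<le> l"
  shows "(\<Sum>c\<in>cells_at i. \<bar>restrict_to (noisy_Ps l s \<nu>) (\<Union>j\<le>l. S j) c - Ps l s c\<bar>)
    = (1/2) ^ i * (\<Sum>c\<in>S i. \<bar>\<nu> c\<bar>) + mass (cells_at i - S i - T) + mass (missed i)"
proof -
  let ?err = "\<lambda>c. \<bar>restrict_to (noisy_Ps l s \<nu>) (\<Union>j\<le>l. S j) c - Ps l s c\<bar>"
  have selected_iff: "c \<in> (\<Union>j\<le>l. S j) \<longleftrightarrow> c \<in> S i" if "c \<in> cells_at i" for c
  proof
    assume "c \<in> (\<Union>j\<le>l. S j)"
    then obtain j where "j \<le> l" "c \<in> S j" by blast
    then have "level c = j"
      using S_subset_cells_at level_cells_at by blast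
    then show "c \<in> S i"
      using \<open>c \<in> S j\<close> level_cells_at[OF that] by simp
  qed (use assms in blast)
  have "sum ?err (cells_at i) = sum ?err (S i) + sum ?err (cells_at i - S i)"
    using sum.subset_diff[OF S_subset_cells_at[OF assms] finite_cells_at, of ?err] by simp
  also have "sum ?err (S i) = (\<Sum>c\<in>S i. (1/2) ^ i * \<bar>\<nu> c\<bar>)"
  proof (rule sum.cong)
    fix c
    assume "c \<in> S i"
    then have "c \<in> cells_at i"
      using assms S_subset_cells_at by blast
    then show "?err c = (1/2) ^ i * \<bar>\<nu> c\<bar>"
      using \<open>c \<in> S i\<close> assms selected_iff noisy_Ps_eq by (simp add: restrict_to_def abs_mult)
  qed simp
  also have "sum ?err (cells_at i - S i) = mass (cells_at i - S i)"
    using selected_iff s_nonneg Ps_nonneg by (intro sum.cong) (auto simp: restrict_to_def)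
  also have "cells_at i - S i = (cells_at i - S i - T) \<union> missed i"
    by auto
  also have "mass \<dots> = mass (cells_at i - S i - T) + mass (missed i)"
    by (rule sum.union_disjoint) auto
  finally show ?thesis by (simp add: sum_distrib_left)
qed

lemma optimum_error_at_level:
  assumes "supp y \<subseteq> T" "i \<le> l"
  shows "mass (S i - T) + mass (cells_at i - S i - T) \<le> (\<Sum>c\<in>cells_at i. \<bar>y c - Ps l s c\<bar>)"
proof -
  have "mass (S i - T) + mass (cells_at i - S i - T) = mass (cells_at i - T)"
    using assms(2) S_subset_cells_at finite_S
    by (subst sum.union_disjoint[symmetric]) (auto intro: arg_cong[where f = mass])
  also have "\<dots> = (\<Sum>c\<in>cells_at i - T. \<bar>y c - Ps l s c\<bar>)"
  proof (rule sum.cong)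
    fix c
    assume "c \<in> cells_at i - T"
    then have "y c = 0"
      using assms(1) by (auto simp: supp_def)
    then show "Ps l s c = \<bar>y c - Ps l s c\<bar>"
      using Ps_nonneg[OF s_nonneg] by simp
  qed simp
  also have "\<dots> \<le> (\<Sum>c\<in>cells_at i. \<bar>y c - Ps l s c\<bar>)"
    by (rule sum_mono2) auto
  finally show ?thesis .
qed

lemma card_missed_children_le:
  assumes "Suc j \<le> l"
  shows "card (missed (Suc j) \<inter> children l (S j)) \<le> card (S (Suc j) - T)"
proof (cases "children l (S j) \<subseteq> S (Suc j)")
  case True
  then have "missed (Suc j) \<inter> children l (S j) = {}"
    by auto
  then show ?thesis by simp
next
  case False
  then have "card (S (Suc j)) < card (children l (S j))"
    using S_Suc_subset[OF assms] by (intro psubset_card_mono) auto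
  then have "card (T \<inter> cells_at (Suc j)) \<le> card (S (Suc j))"
    using card_S_Suc[OF assms] T_subtree assms by (auto simp: subtrees_def)
  then have "card (missed (Suc j)) \<le> card (S (Suc j) - T \<inter> cells_at (Suc j))"
    using finite_S[OF assms] by (intro card_Diff_le_card_Diff) auto
  also have "S (Suc j) - T \<inter> cells_at (Suc j) = S (Suc j) - T"
    using S_subset_cells_at[OF assms] by auto
  finally show ?thesis
    by (rule order_trans[rotated]) (simp add: card_mono)
qed

lemma mass_missed_children_le:
  assumes "Suc j \<le> l"
  shows "mass (missed (Suc j) \<inter> children l (S j)) \<le> mass (S (Suc j) - T) + 2 * noise (Suc j)"
proof -
  let ?F = "missed (Suc j) \<inter> children l (S j)" and ?E = "S (Suc j) - T"
  define h where "h c = (1/2) ^ Suc j * \<bar>\<nu> c\<bar>" for c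
  have noise_eq: "noise (Suc j) = sum h (missed (Suc j) \<union> S (Suc j))"
    by (simp add: h_def sum_distrib_left)
  have noisy_near: "\<bar>noisy_Ps l s \<nu> c - Ps l s c\<bar> \<le> h c" if "c \<in> cells_at (Suc j)" for c
    using noisy_Ps_eq[OF that assms] by (simp add: h_def abs_mult)
  have E_cells: "?E \<subseteq> cells_at (Suc j)"
    using S_subset_cells_at[OF assms] by auto
  have "mass ?F \<le> (\<Sum>c\<in>?F. noisy_Ps l s \<nu> c + h c)"
  proof (rule sum_mono)
    fix c
    assume "c \<in> ?F"
    then have "c \<in> cells_at (Suc j)" by blast
    then show "Ps l s c \<le> noisy_Ps l s \<nu> c + h c"
      using noisy_near unfolding abs_le_iff by fastforce
  qed
  also have "\<dots> = sum (noisy_Ps l s \<nu>) ?F + sum h ?F"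
    by (rule sum.distrib)
  also have "sum (noisy_Ps l s \<nu>) ?F \<le> (\<Sum>c\<in>?E. Ps l s c + h c)"
  proof (rule sum_le_sum_if_dominated)
    show "finite ?E"
      using finite_S[OF assms] by simp
    show "card ?F \<le> card ?E"
      by (rule card_missed_children_le[OF assms])
    show "0 \<le> Ps l s c + h c" for c
      using Ps_nonneg[OF s_nonneg] by (simp add: h_def)
    show "noisy_Ps l s \<nu> c' \<le> Ps l s c + h c" if "c' \<in> ?F" "c \<in> ?E" for c' c
    proof -
      have "noisy_Ps l s \<nu> c' \<le> noisy_Ps l s \<nu> c"
        using that by (intro S_Suc_greedy[OF assms]) auto
      also have "\<dots> \<le> Ps l s c + h c"
        using noisy_near[of c] that E_cells by (auto simp: abs_le_iff)
      finally show ?thesis .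
    qed
  qed
  also have "(\<Sum>c\<in>?E. Ps l s c + h c) = mass ?E + sum h ?E"
    by (rule sum.distrib)
  finally have "mass ?F \<le> mass ?E + sum h ?E + sum h ?F"
    by simp
  moreover have "sum h ?E \<le> noise (Suc j)" "sum h ?F \<le> noise (Suc j)"
    unfolding noise_eq using finite_S[OF assms]
    by (intro sum_mono2; auto simp: h_def)+
  ultimately show ?thesis by linarith
qed

lemma mass_missed_orphans_le:
  assumes "Suc j \<le> l"
  shows "mass (missed (Suc j) - children l (S j)) \<le> mass (missed j) / 2"
proof -
  have "missed (Suc j) - children l (S j) \<subseteq> children l (missed j)"
  proof
    fix c
    assume c: "c \<in> missed (Suc j) - children l (S j)"
    then obtain p where p: "p \<in> cells_at j" "is_child l c p"
      using ex_parent assms by blast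
    have "p \<in> T"
      using T_subtree c p(2) unfolding subtrees_def by blast
    moreover have "p \<notin> S j"
      using c p(2) by (auto simp: children_def)
    ultimately show "c \<in> children l (missed j)"
      using p by (auto simp: children_def)
  qed
  then have "mass (missed (Suc j) - children l (S j)) \<le> mass (children l (missed j))"
    by (intro sum_mono2) (simp_all add: Ps_nonneg s_nonneg)
  also have "\<dots> \<le> mass (missed j) / 2"
    by (rule sum_Ps_children_set_le) (simp_all add: s_nonneg)
  finally show ?thesis .
qed

lemma mass_missed_Suc_le:
  assumes "Suc j \<le> l"
  shows "mass (missed (Suc j)) \<le> mass (S (Suc j) - T) + 2 * noise (Suc j) + mass (missed j) / 2"
proof -
  have "mass (missed (Suc j))
      = mass (missed (Suc j) \<inter> children l (S j)) + mass (missed (Suc j) - children l (S j))"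
    by (rule sum.Int_Diff) simp
  then show ?thesis
    using mass_missed_children_le[OF assms] mass_missed_orphans_le[OF assms] by linarith
qed

lemma sum_mass_missed_le:
  "(\<Sum>i\<le>l. mass (missed i)) \<le> 2 * (\<Sum>i\<le>l. mass (S i - T) + 2 * noise i)"
proof (rule sum_le_twice_if_halving)
  have "missed 0 = {}"
    by (auto simp: S_0 cells_at_0)
  then have "mass (missed 0) = 0"
    by (metis sum.empty)
  moreover have "0 \<le> mass (S 0 - T)" "0 \<le> noise 0"
    by (auto intro!: sum_nonneg simp: Ps_nonneg s_nonneg)
  ultimately show "mass (missed 0) \<le> mass (S 0 - T) + 2 * noise 0"
    by linarith
  show "mass (missed (Suc j)) \<le> mass (S (Suc j) - T) + 2 * noise (Suc j) + mass (missed j) / 2"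
    if "Suc j \<le> l" for j
    using mass_missed_Suc_le[OF that] .
  show "0 \<le> mass (missed l)"
    by (simp add: sum_nonneg Ps_nonneg s_nonneg)
qed

theorem error_bound:
  assumes "supp y \<subseteq> T"
  shows "l1 l (\<lambda>c. restrict_to (noisy_Ps l s \<nu>) (\<Union>i\<le>l. S i) c - Ps l s c)
    \<le> 3 * l1 l (\<lambda>c. y c - Ps l s c) + 5 * (\<Sum>i\<le>l. noise i)"
proof -
  let ?a = "\<lambda>i. mass (S i - T)" and ?b = "\<lambda>i. mass (cells_at i - S i - T)"
    and ?v = "\<lambda>i. mass (missed i)"
  have "l1 l (\<lambda>c. restrict_to (noisy_Ps l s \<nu>) (\<Union>i\<le>l. S i) c - Ps l s c)
      = (\<Sum>i\<le>l. (1/2) ^ i * (\<Sum>c\<in>S i. \<bar>\<nu> c\<bar>) + ?b i + ?v i)"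
    unfolding l1_def sum_all_cells by (intro sum.cong) (simp_all add: error_at_level)
  also have "\<dots> \<le> (\<Sum>i\<le>l. noise i + ?b i + ?v i)"
    using finite_S by (intro sum_mono add_right_mono mult_left_mono sum_mono2) auto
  also have "\<dots> = sum noise {..l} + sum ?b {..l} + sum ?v {..l}"
    by (simp add: sum.distrib)
  also have "sum ?v {..l} \<le> 2 * sum ?a {..l} + 4 * sum noise {..l}"
    using sum_mass_missed_le by (simp add: sum.distrib sum_distrib_left)
  finally have "l1 l (\<lambda>c. restrict_to (noisy_Ps l s \<nu>) (\<Union>i\<le>l. S i) c - Ps l s c)
      \<le> sum noise {..l} + sum ?b {..l} + (2 * sum ?a {..l} + 4 * sum noise {..l})"
    by simp
  moreover have "0 \<le> sum ?a {..l}" "0 \<le> sum ?b {..l}"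
    by (auto intro!: sum_nonneg simp: Ps_nonneg s_nonneg)
  moreover have "sum ?a {..l} + sum ?b {..l} \<le> l1 l (\<lambda>c. y c - Ps l s c)"
    unfolding l1_def sum_all_cells sum.distrib[symmetric]
    using optimum_error_at_level[OF assms] by (intro sum_mono) auto
  ultimately show ?thesis by linarith
qed

end

theorem lemma3:
  shows "\<exists>C::real. C > 0 \<and>
    (\<forall>(l::nat) (w::nat) (s::gpoint \<Rightarrow> real) (\<nu>::cell \<Rightarrow> real)
       (S::nat \<Rightarrow> cell set) (ystar::cell \<Rightarrow> real) (Tstar::cell set).
      let y' = (\<lambda>c. if c \<in> all_cells l then (1/2) ^ level c * (Pi_s l s c + \<nu> c) else 0);
          Sall = (\<Union>i\<le>l. S i);
          yhat = restrict_to y' Sall;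
          V = (\<lambda>i. (Tstar \<inter> cells_at i) - S i)
      in
      (\<forall>p\<in>grid l. s p \<ge> 0) \<longrightarrow>
      S 0 = {root} \<longrightarrow>
      (\<forall>i\<in>{1..l}. S i \<subseteq> children l (S (i - 1)) \<and>
          card (S i) = min w (card (children l (S (i - 1)))) \<and>
          (\<forall>c\<in>S i. \<forall>c'\<in>children l (S (i - 1)) - S i. y' c' \<le> y' c)) \<longrightarrow>
      ystar \<in> Mw l w \<longrightarrow>
      (\<forall>y\<in>Mw l w. l1 l (\<lambda>c. Ps l s c - ystar c) \<le> l1 l (\<lambda>c. Ps l s c - y c)) \<longrightarrow>
      Tstar \<in> subtrees l w \<longrightarrow> supp ystar \<subseteq> Tstar \<longrightarrow>
      l1 l (\<lambda>c. yhat c - Ps l s c)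
        \<le> 3 * l1 l (\<lambda>c. ystar c - Ps l s c)
          + C * (\<Sum>i\<le>l. (1/2) ^ i * (\<Sum>c\<in>V i \<union> S i. \<bar>\<nu> c\<bar>)))"
  unfolding Let_def
proof (intro exI[of _ 5] conjI allI impI, goal_cases)
  case 1
  then show ?case by simp
next
  case (2 l w s \<nu> S ystar Tstar)
  have step: "S (Suc j) \<subseteq> children l (S j) \<and> card (S (Suc j)) = min w (card (children l (S j))) \<and>
      (\<forall>c\<in>S (Suc j). \<forall>c'\<in>children l (S j) - S (Suc j). noisy_Ps l s \<nu> c' \<le> noisy_Ps l s \<nu> c)"
    if "Suc j \<le> l" for j
    using bspec[OF 2(3), of "Suc j"] that unfolding noisy_Ps_def by simp
  interpret greedy_tree_selection l w s \<nu> S Tstar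
    using 2 step by unfold_locales blast+
  show ?case
    using error_bound[OF 2(7)] by (simp add: noisy_Ps_def[abs_def])
qed

end
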